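(* Let $\mathfrak g\xrightarrow{\mu}\mathfrak h$ be a crossed module of Lie algebras and let $\mathfrak e_1\xrightarrow{\epsilon}\mathfrak e_0$ (with action $\mathcal L^\epsilon$), together with crossed module morphisms $(j_1,j_0):(W\xrightarrow{\phi}V)\to(\mathfrak e_1\to\mathfrak e_0)$ and $(\pi_1,\pi_0):(\mathfrak e_1\to\mathfrak e_0)\to(\mathfrak g\to\mathfrak h)$, be a 2-extension of $\mathfrak g\xrightarrow{\mu}\mathfrak h$ by $W\xrightarrow{\phi}V$. Identify $W\subseteq\mathfrak e_1$ and $V\subseteq\mathfrak e_0$ via $j_1,j_0$, and let $\sigma_0:\mathfrak h\to\mathfrak e_0$, $\sigma_1:\mathfrak g\to\mathfrak e_1$ be linear maps with $\pi_0\sigma_0=\mathrm{id}$, $\pi_1\sigma_1=\mathrm{id}$. Then the maps $$\rho_0^0(y)v=[\sigma_0(y),v]_{\mathfrak e_0},\qquad\rho_0^1(y)w=\mathcal L^\epsilon_{\sigma_0(y)}w,\qquad\rho_1(x)v=-\mathcal L^\epsilon_v\sigma_1(x)$$ ($y\in\mathfrak h$, $v\in V$, $w\in W$, $x\in\mathfrak g$) take values in $V$, $W$, $W$ respectively and define a 2-representation of $\mathfrak g\xrightarrow{\mu}\mathfrak h$ on $W\xrightarrow{\phi}V$.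
   Context: A crossed module of Lie algebras consists of Lie algebras $\mathfrak g,\mathfrak h$, a Lie algebra homomorphism $\mu:\mathfrak g\to\mathfrak h$ and a Lie algebra homomorphism $\mathcal L:\mathfrak h\to\mathrm{Der}(\mathfrak g)$ with $\mu(\mathcal L_yx)=[y,\mu(x)]$ and $\mathcal L_{\mu(x_0)}x_1=[x_0,x_1]$. A morphism of crossed modules is a pair of Lie algebra homomorphisms $(f_1,f_0)$ commuting with the structure maps and satisfying $f_1(\mathcal L_yx)=\mathcal L'_{f_0(y)}f_1(x)$. A linear map $\phi:W\to V$ is regarded as a crossed module with abelian brackets and zero action. A 2-extension of $\mathfrak g\xrightarrow{\mu}\mathfrak h$ by $W\xrightarrow{\phi}V$ is a crossed module $\mathfrak e_1\xrightarrow{\epsilon}\mathfrak e_0$ with morphisms $(j_1,j_0)$, $(\pi_1,\pi_0)$ as in the claim such that $0\to W\xrightarrow{j_1}\mathfrak e_1\xrightarrow{\pi_1}\mathfrak g\to0$ and $0\to V\xrightarrow{j_0}\mathfrak e_0\xrightarrow{\pi_0}\mathfrak h\to0$ are exact. A 2-representation on $\phi$: linear maps $\rho_0^1:\mathfrak h\to\mathfrak{gl}(W)$, $\rho_0^0:\mathfrak h\to\mathfrak{gl}(V)$, $\rho_1:\mathfrak g\to\mathrm{Hom}(V,W)$ with $\rho_0^1,\rho_0^0$ Lie algebra representations, $\phi\rho_0^1(y)=\rho_0^0(y)\phi$, $\rho_1([x_0,x_1])=\rho_1(x_0)\phi\rho_1(x_1)-\rho_1(x_1)\phi\rho_1(x_0)$,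 $\rho_0^0(\mu(x))=\phi\rho_1(x)$, $\rho_0^1(\mu(x))=\rho_1(x)\phi$, $\rho_1(\mathcal L_yx)=\rho_0^1(y)\rho_1(x)-\rho_1(x)\rho_0^0(y)$. *)

theory Defs
  imports Main "HOL.Vector_Spaces"
begin

definition lie_algebra ::
  "('k::field \<Rightarrow> 'a::ab_group_add \<Rightarrow> 'a) \<Rightarrow> ('a \<Rightarrow> 'a \<Rightarrow> 'a) \<Rightarrow> bool" where
  "lie_algebra s br \<longleftrightarrow>
     vector_space s \<and>
     (\<forall>x. Vector_Spaces.linear s s (br x)) \<and>
     (\<forall>y. Vector_Spaces.linear s s (\<lambda>x. br x y)) \<and>
     (\<forall>x. br x x = 0) \<and>
     (\<forall>x y z. br x (br y z) + br y (br z x) + br z (br x y) = 0)"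

definition lie_hom ::
  "('k::field \<Rightarrow> 'a::ab_group_add \<Rightarrow> 'a) \<Rightarrow> ('a \<Rightarrow> 'a \<Rightarrow> 'a) \<Rightarrow>
   ('k \<Rightarrow> 'b::ab_group_add \<Rightarrow> 'b) \<Rightarrow> ('b \<Rightarrow> 'b \<Rightarrow> 'b) \<Rightarrow> ('a \<Rightarrow> 'b) \<Rightarrow> bool" where
  "lie_hom sa bra sb brb f \<longleftrightarrow>
     Vector_Spaces.linear sa sb f \<and> (\<forall>x y. f (bra x y) = brb (f x) (f y))"

definition derivation ::
  "('k::field \<Rightarrow> 'a::ab_group_add \<Rightarrow> 'a) \<Rightarrow> ('a \<Rightarrow> 'a \<Rightarrow> 'a) \<Rightarrow> ('a \<Rightarrow> 'a) \<Rightarrow> bool" where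
  "derivation s br D \<longleftrightarrow>
     Vector_Spaces.linear s s D \<and> (\<forall>x y. D (br x y) = br (D x) y + br x (D y))"

text \<open>A Lie algebra homomorphism h -> Der(g) (bracket of Der(g) = commutator).\<close>
definition lie_action ::
  "('k::field \<Rightarrow> 'h::ab_group_add \<Rightarrow> 'h) \<Rightarrow> ('h \<Rightarrow> 'h \<Rightarrow> 'h) \<Rightarrow>
   ('k \<Rightarrow> 'g::ab_group_add \<Rightarrow> 'g) \<Rightarrow> ('g \<Rightarrow> 'g \<Rightarrow> 'g) \<Rightarrow> ('h \<Rightarrow> 'g \<Rightarrow> 'g) \<Rightarrow> bool" where
  "lie_action sh bh sg bg L \<longleftrightarrow>
     (\<forall>y. derivation sg bg (L y)) \<and>
     (\<forall>x. Vector_Spaces.linear sh sg (\<lambda>y. L y x)) \<and>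
     (\<forall>y1 y2 x. L (bh y1 y2) x = L y1 (L y2 x) - L y2 (L y1 x))"

definition crossed_module ::
  "('k::field \<Rightarrow> 'g::ab_group_add \<Rightarrow> 'g) \<Rightarrow> ('g \<Rightarrow> 'g \<Rightarrow> 'g) \<Rightarrow>
   ('k \<Rightarrow> 'h::ab_group_add \<Rightarrow> 'h) \<Rightarrow> ('h \<Rightarrow> 'h \<Rightarrow> 'h) \<Rightarrow>
   ('g \<Rightarrow> 'h) \<Rightarrow> ('h \<Rightarrow> 'g \<Rightarrow> 'g) \<Rightarrow> bool" where
  "crossed_module sg bg sh bh mu L \<longleftrightarrow>
     lie_algebra sg bg \<and> lie_algebra sh bh \<and>
     lie_hom sg bg sh bh mu \<and> lie_action sh bh sg bg L \<and>
     (\<forall>y x. mu (L y x) = bh y (mu x)) \<and>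
     (\<forall>x0 x1. L (mu x0) x1 = bg x0 x1)"

definition cm_morphism ::
  "('k::field \<Rightarrow> 'g::ab_group_add \<Rightarrow> 'g) \<Rightarrow> ('g \<Rightarrow> 'g \<Rightarrow> 'g) \<Rightarrow>
   ('k \<Rightarrow> 'h::ab_group_add \<Rightarrow> 'h) \<Rightarrow> ('h \<Rightarrow> 'h \<Rightarrow> 'h) \<Rightarrow>
   ('g \<Rightarrow> 'h) \<Rightarrow> ('h \<Rightarrow> 'g \<Rightarrow> 'g) \<Rightarrow>
   ('k \<Rightarrow> 'g2::ab_group_add \<Rightarrow> 'g2) \<Rightarrow> ('g2 \<Rightarrow> 'g2 \<Rightarrow> 'g2) \<Rightarrow>
   ('k \<Rightarrow> 'h2::ab_group_add \<Rightarrow> 'h2) \<Rightarrow> ('h2 \<Rightarrow> 'h2 \<Rightarrow> 'h2) \<Rightarrow>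
   ('g2 \<Rightarrow> 'h2) \<Rightarrow> ('h2 \<Rightarrow> 'g2 \<Rightarrow> 'g2) \<Rightarrow>
   ('g \<Rightarrow> 'g2) \<Rightarrow> ('h \<Rightarrow> 'h2) \<Rightarrow> bool" where
  "cm_morphism sg bg sh bh mu L sg' bg' sh' bh' mu' L' f1 f0 \<longleftrightarrow>
     lie_hom sg bg sg' bg' f1 \<and> lie_hom sh bh sh' bh' f0 \<and>
     (\<forall>x. f0 (mu x) = mu' (f1 x)) \<and>
     (\<forall>y x. f1 (L y x) = L' (f0 y) (f1 x))"

definition short_exact ::
  "('k::field \<Rightarrow> 'a::ab_group_add \<Rightarrow> 'a) \<Rightarrow> ('k \<Rightarrow> 'b::ab_group_add \<Rightarrow> 'b) \<Rightarrow>
   ('k \<Rightarrow> 'c::ab_group_add \<Rightarrow> 'c) \<Rightarrow> ('a \<Rightarrow> 'b) \<Rightarrow> ('b \<Rightarrow> 'c) \<Rightarrow> bool" where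
  "short_exact sa sb sc i p \<longleftrightarrow>
     Vector_Spaces.linear sa sb i \<and> Vector_Spaces.linear sb sc p \<and>
     inj i \<and> surj p \<and> range i = {b. p b = 0}"

text \<open>A linear map phi : W -> V regarded as a crossed module: abelian brackets, zero action.\<close>
definition two_extension ::
  "('k::field \<Rightarrow> 'g::ab_group_add \<Rightarrow> 'g) \<Rightarrow> ('g \<Rightarrow> 'g \<Rightarrow> 'g) \<Rightarrow>
   ('k \<Rightarrow> 'h::ab_group_add \<Rightarrow> 'h) \<Rightarrow> ('h \<Rightarrow> 'h \<Rightarrow> 'h) \<Rightarrow>
   ('g \<Rightarrow> 'h) \<Rightarrow> ('h \<Rightarrow> 'g \<Rightarrow> 'g) \<Rightarrow>
   ('k \<Rightarrow> 'w::ab_group_add \<Rightarrow> 'w) \<Rightarrow> ('k \<Rightarrow> 'v::ab_group_add \<Rightarrow> 'v) \<Rightarrow> ('w \<Rightarrow> 'v) \<Rightarrow>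
   ('k \<Rightarrow> 'e1::ab_group_add \<Rightarrow> 'e1) \<Rightarrow> ('e1 \<Rightarrow> 'e1 \<Rightarrow> 'e1) \<Rightarrow>
   ('k \<Rightarrow> 'e0::ab_group_add \<Rightarrow> 'e0) \<Rightarrow> ('e0 \<Rightarrow> 'e0 \<Rightarrow> 'e0) \<Rightarrow>
   ('e1 \<Rightarrow> 'e0) \<Rightarrow> ('e0 \<Rightarrow> 'e1 \<Rightarrow> 'e1) \<Rightarrow>
   ('w \<Rightarrow> 'e1) \<Rightarrow> ('v \<Rightarrow> 'e0) \<Rightarrow> ('e1 \<Rightarrow> 'g) \<Rightarrow> ('e0 \<Rightarrow> 'h) \<Rightarrow> bool" where
  "two_extension sg bg sh bh mu L sw sv phi se1 be1 se0 be0 eps Le j1 j0 pi1 pi0 \<longleftrightarrow>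
     crossed_module se1 be1 se0 be0 eps Le \<and>
     cm_morphism sw (\<lambda>_ _. 0) sv (\<lambda>_ _. 0) phi (\<lambda>_ _. 0)
                 se1 be1 se0 be0 eps Le j1 j0 \<and>
     cm_morphism se1 be1 se0 be0 eps Le sg bg sh bh mu L pi1 pi0 \<and>
     short_exact sw se1 sg j1 pi1 \<and> short_exact sv se0 sh j0 pi0"

definition two_representation ::
  "('k::field \<Rightarrow> 'g::ab_group_add \<Rightarrow> 'g) \<Rightarrow> ('g \<Rightarrow> 'g \<Rightarrow> 'g) \<Rightarrow>
   ('k \<Rightarrow> 'h::ab_group_add \<Rightarrow> 'h) \<Rightarrow> ('h \<Rightarrow> 'h \<Rightarrow> 'h) \<Rightarrow>
   ('g \<Rightarrow> 'h) \<Rightarrow> ('h \<Rightarrow> 'g \<Rightarrow> 'g) \<Rightarrow>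
   ('k \<Rightarrow> 'w::ab_group_add \<Rightarrow> 'w) \<Rightarrow> ('k \<Rightarrow> 'v::ab_group_add \<Rightarrow> 'v) \<Rightarrow> ('w \<Rightarrow> 'v) \<Rightarrow>
   ('h \<Rightarrow> 'w \<Rightarrow> 'w) \<Rightarrow> ('h \<Rightarrow> 'v \<Rightarrow> 'v) \<Rightarrow> ('g \<Rightarrow> 'v \<Rightarrow> 'w) \<Rightarrow> bool" where
  "two_representation sg bg sh bh mu L sw sv phi r01 r00 r1 \<longleftrightarrow>
     (\<forall>y. Vector_Spaces.linear sw sw (r01 y)) \<and>
     (\<forall>w. Vector_Spaces.linear sh sw (\<lambda>y. r01 y w)) \<and>
     (\<forall>y. Vector_Spaces.linear sv sv (r00 y)) \<and>
     (\<forall>v. Vector_Spaces.linear sh sv (\<lambda>y. r00 y v)) \<and>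
     (\<forall>x. Vector_Spaces.linear sv sw (r1 x)) \<and>
     (\<forall>v. Vector_Spaces.linear sg sw (\<lambda>x. r1 x v)) \<and>
     (\<forall>y1 y2 w. r01 (bh y1 y2) w = r01 y1 (r01 y2 w) - r01 y2 (r01 y1 w)) \<and>
     (\<forall>y1 y2 v. r00 (bh y1 y2) v = r00 y1 (r00 y2 v) - r00 y2 (r00 y1 v)) \<and>
     (\<forall>y w. phi (r01 y w) = r00 y (phi w)) \<and>
     (\<forall>x0 x1 v. r1 (bg x0 x1) v =
                 r1 x0 (phi (r1 x1 v)) - r1 x1 (phi (r1 x0 v))) \<and>
     (\<forall>x v. r00 (mu x) v = phi (r1 x v)) \<and>
     (\<forall>x w. r01 (mu x) w = r1 x (phi w)) \<and>
     (\<forall>y x v. r1 (L y x) v = r01 y (r1 x v) - r1 x (r00 y v))"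

end

theory Submission
  imports Defs
begin

(* V = ker pi0 and W = ker pi1 are ideals, and the structure among them is trivial:
   [V, V] = 0 and L_V W = 0. Hence [sigma0 y, -], L_(sigma0 y) and -L_(-) (sigma1 x)
   map V, W into V, W, and every failure of the sections to respect brackets, mu and the
   action (e.g. sigma0 [y1, y2] - [sigma0 y1, sigma0 y2]) lies in V or W, where it acts
   trivially on the arguments. So each 2-representation identity is an identity of the
   crossed module e1 -> e0, pulled back along the injective maps j0, j1. *)

lemma linear_simps:
  assumes "Vector_Spaces.linear s1 s2 f"
  shows "f 0 = 0" "f (x + y) = f x + f y" "f (- x) = - f x" "f (x - y) = f x - f y"
    "f (s1 c x) = s2 c (f x)"
  using module_hom.zero module_hom.add module_hom.neg module_hom.diff module_hom.scale
    module_hom_linearI[OF assms] by metis+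

lemma linear_uminus:
  assumes "Vector_Spaces.linear s1 s2 f"
  shows "Vector_Spaces.linear s1 s2 (\<lambda>x. - f x)"
proof -
  have "module s2"
    using assms by (simp add: linear_iff module_iff_vector_space)
  then have "Vector_Spaces.linear s2 s2 uminus"
    using module.module_hom_uminus module_hom_iff_linear by blast
  from Vector_Spaces.linear_compose[OF assms this] show ?thesis
    by (simp add: o_def)
qed

lemma linear_cancel_inj:
  assumes i: "Vector_Spaces.linear sa sb i" and "inj i"
    and ir: "Vector_Spaces.linear sc sb (\<lambda>x. i (r x))"
  shows "Vector_Spaces.linear sc sa r"
proof -
  have "i (r (x + y)) = i (r x + r y)" for x y
    using linear_simps(2)[OF i] linear_simps(2)[OF ir] by simp
  moreover have "i (r (sc c x)) = i (sa c (r x))" for c x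
    using linear_simps(5)[OF i] linear_simps(5)[OF ir] by simp
  ultimately show ?thesis
    using i ir \<open>inj i\<close> by (simp add: linear_iff inj_eq)
qed

lemma f_The_eq: "inj f \<Longrightarrow> e \<in> range f \<Longrightarrow> f (THE a. f a = e) = e"
  using f_the_inv_into_f[of f UNIV e] by (simp add: the_inv_into_def)

lemma short_exact_fibre:
  assumes "short_exact sa sb sc i p" and "p b = p b'"
  obtains a where "b = b' + i a"
proof -
  have "p (b - b') = 0"
    using assms linear_simps(4)[of sb sc p] unfolding short_exact_def by auto
  then have "b - b' \<in> range i"
    using assms(1) unfolding short_exact_def by simp
  then obtain a where "b - b' = i a"
    by blast
  then show thesis
    using that by (metis add.commute diff_add_cancel)
qed

lemma lie_algebra_antisym:
  assumes "lie_algebra s br"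
  shows "br x y = - br y x"
proof -
  have left: "Vector_Spaces.linear s s (br z)" and right: "Vector_Spaces.linear s s (\<lambda>u. br u z)"
    and alt: "br u u = 0" for z u
    using assms unfolding lie_algebra_def by auto
  have "br x y + br y x = br x x + br y x + (br x y + br y y)"
    by (simp add: alt add.commute)
  also have "\<dots> = br (x + y) (x + y)"
    by (simp only: linear_simps(2)[OF left] linear_simps(2)[OF right])
  also have "\<dots> = 0"
    by (rule alt)
  finally show ?thesis
    by (simp add: eq_neg_iff_add_eq_0)
qed

lemma lie_algebra_leibniz:
  assumes "lie_algebra s br"
  shows "br (br a b) c = br a (br b c) - br b (br a c)"
proof -
  have "br a (br b c) + br b (br c a) + br c (br a b) = 0"
    using assms unfolding lie_algebra_def by blast
  moreover have "br b (br c a) = - br b (br a c)"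
    using assms lie_algebra_antisym[OF assms, of c a] linear_simps(3)
    unfolding lie_algebra_def by metis
  moreover have "br (br a b) c = - br c (br a b)"
    by (rule lie_algebra_antisym[OF assms])
  ultimately show ?thesis
    by (simp add: add_eq_0_iff2 algebra_simps)
qed

locale two_extension_with_sections =
  fixes sg :: "'k::field \<Rightarrow> 'g::ab_group_add \<Rightarrow> 'g" and bg :: "'g \<Rightarrow> 'g \<Rightarrow> 'g"
    and sh :: "'k \<Rightarrow> 'h::ab_group_add \<Rightarrow> 'h" and bh :: "'h \<Rightarrow> 'h \<Rightarrow> 'h"
    and mu :: "'g \<Rightarrow> 'h" and L :: "'h \<Rightarrow> 'g \<Rightarrow> 'g"
    and sw :: "'k \<Rightarrow> 'w::ab_group_add \<Rightarrow> 'w" and sv :: "'k \<Rightarrow> 'v::ab_group_add \<Rightarrow> 'v"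
    and phi :: "'w \<Rightarrow> 'v"
    and se1 :: "'k \<Rightarrow> 'e1::ab_group_add \<Rightarrow> 'e1" and be1 :: "'e1 \<Rightarrow> 'e1 \<Rightarrow> 'e1"
    and se0 :: "'k \<Rightarrow> 'e0::ab_group_add \<Rightarrow> 'e0" and be0 :: "'e0 \<Rightarrow> 'e0 \<Rightarrow> 'e0"
    and eps :: "'e1 \<Rightarrow> 'e0" and Le :: "'e0 \<Rightarrow> 'e1 \<Rightarrow> 'e1"
    and j1 :: "'w \<Rightarrow> 'e1" and j0 :: "'v \<Rightarrow> 'e0"
    and pi1 :: "'e1 \<Rightarrow> 'g" and pi0 :: "'e0 \<Rightarrow> 'h"
    and sigma0 :: "'h \<Rightarrow> 'e0" and sigma1 :: "'g \<Rightarrow> 'e1"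
  assumes crossed_module: "crossed_module sg bg sh bh mu L"
    and two_extension:
      "two_extension sg bg sh bh mu L sw sv phi se1 be1 se0 be0 eps Le j1 j0 pi1 pi0"
    and linear_sigma0: "Vector_Spaces.linear sh se0 sigma0"
    and linear_sigma1: "Vector_Spaces.linear sg se1 sigma1"
    and pi0_sigma0: "\<And>y. pi0 (sigma0 y) = y"
    and pi1_sigma1: "\<And>x. pi1 (sigma1 x) = x"
begin

lemma lie_algebra_h: "lie_algebra sh bh"
  and linear_L: "Vector_Spaces.linear sg sg (L y)"
  and linear_L_left: "Vector_Spaces.linear sh sg (\<lambda>y. L y x)"
  using crossed_module unfolding crossed_module_def lie_action_def derivation_def by auto

lemma lie_algebra_e1: "lie_algebra se1 be1"
  and lie_algebra_e0: "lie_algebra se0 be0"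
  and linear_eps: "Vector_Spaces.linear se1 se0 eps"
  and linear_Le: "Vector_Spaces.linear se1 se1 (Le a)"
  and linear_Le_left: "Vector_Spaces.linear se0 se1 (\<lambda>a. Le a x)"
  and Le_derivation: "Le a (be1 x z) = be1 (Le a x) z + be1 x (Le a z)"
  and Le_bracket: "Le (be0 a b) x = Le a (Le b x) - Le b (Le a x)"
  and eps_Le: "eps (Le a x) = be0 a (eps x)"
  and Le_eps: "Le (eps x) z = be1 x z"
  using two_extension
  unfolding two_extension_def crossed_module_def lie_hom_def lie_action_def derivation_def
  by auto

lemma linear_be0: "Vector_Spaces.linear se0 se0 (be0 a)"
  and linear_be0_left: "Vector_Spaces.linear se0 se0 (\<lambda>b. be0 b a)"
  and linear_be1_left: "Vector_Spaces.linear se1 se1 (\<lambda>x. be1 x z)"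
  using lie_algebra_e0 lie_algebra_e1 unfolding lie_algebra_def by auto

lemma exact1: "short_exact sw se1 sg j1 pi1"
  and exact0: "short_exact sv se0 sh j0 pi0"
  using two_extension unfolding two_extension_def by auto

lemma linear_j1: "Vector_Spaces.linear sw se1 j1"
  and linear_j0: "Vector_Spaces.linear sv se0 j0"
  and inj_j1: "inj j1"
  and inj_j0: "inj j0"
  and range_j1: "range j1 = {e. pi1 e = 0}"
  and range_j0: "range j0 = {e. pi0 e = 0}"
  and linear_pi1: "Vector_Spaces.linear se1 sg pi1"
  using exact1 exact0 unfolding short_exact_def by auto

lemma pi1_j1: "pi1 (j1 w) = 0"
  and pi0_j0: "pi0 (j0 v) = 0"
  using range_j1 range_j0 by auto

lemma pi1_bracket: "pi1 (be1 x z) = bg (pi1 x) (pi1 z)"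
  and pi0_bracket: "pi0 (be0 a b) = bh (pi0 a) (pi0 b)"
  and pi0_eps: "pi0 (eps x) = mu (pi1 x)"
  and pi1_Le: "pi1 (Le a x) = L (pi0 a) (pi1 x)"
  using two_extension unfolding two_extension_def cm_morphism_def lie_hom_def by auto

lemma bracket_j0_j0: "be0 (j0 v) (j0 v') = 0"
  and Le_j0_j1: "Le (j0 v) (j1 w) = 0"
  and eps_j1: "eps (j1 w) = j0 (phi w)"
  using two_extension linear_simps(1)[OF linear_j0] linear_simps(1)[OF linear_j1]
  unfolding two_extension_def cm_morphism_def lie_hom_def by metis+

lemma bracket_sigma0_j0_in_range: "be0 (sigma0 y) (j0 v) \<in> range j0"
proof -
  have "bh y 0 = 0"
    using lie_algebra_h linear_simps(1) unfolding lie_algebra_def by blast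
  then show ?thesis
    by (simp add: range_j0 pi0_bracket pi0_sigma0 pi0_j0)
qed

lemma Le_sigma0_j1_in_range: "Le (sigma0 y) (j1 w) \<in> range j1"
  by (simp add: range_j1 pi1_Le pi1_j1 linear_simps(1)[OF linear_L])

lemma Le_j0_sigma1_in_range: "- Le (j0 v) (sigma1 x) \<in> range j1"
  by (simp add: range_j1 pi1_Le pi0_j0 linear_simps(1)[OF linear_L_left]
      linear_simps(3)[OF linear_pi1])

definition rho00 :: "'h \<Rightarrow> 'v \<Rightarrow> 'v"
  where "rho00 y v = (THE v'. j0 v' = be0 (sigma0 y) (j0 v))"

definition rho01 :: "'h \<Rightarrow> 'w \<Rightarrow> 'w"
  where "rho01 y w = (THE w'. j1 w' = Le (sigma0 y) (j1 w))"

definition rho1 :: "'g \<Rightarrow> 'v \<Rightarrow> 'w"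
  where "rho1 x v = (THE w'. j1 w' = - Le (j0 v) (sigma1 x))"

lemma j0_rho00: "j0 (rho00 y v) = be0 (sigma0 y) (j0 v)"
  unfolding rho00_def by (rule f_The_eq[OF inj_j0 bracket_sigma0_j0_in_range])

lemma j1_rho01: "j1 (rho01 y w) = Le (sigma0 y) (j1 w)"
  unfolding rho01_def by (rule f_The_eq[OF inj_j1 Le_sigma0_j1_in_range])

lemma j1_rho1: "j1 (rho1 x v) = - Le (j0 v) (sigma1 x)"
  unfolding rho1_def by (rule f_The_eq[OF inj_j1 Le_j0_sigma1_in_range])

lemma linear_rho00: "Vector_Spaces.linear sv sv (rho00 y)"
  by (rule linear_cancel_inj[OF linear_j0 inj_j0])
    (simp add: j0_rho00 Vector_Spaces.linear_compose[OF linear_j0 linear_be0, unfolded o_def])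

lemma linear_rho00_left: "Vector_Spaces.linear sh sv (\<lambda>y. rho00 y v)"
  by (rule linear_cancel_inj[OF linear_j0 inj_j0])
    (simp add: j0_rho00
      Vector_Spaces.linear_compose[OF linear_sigma0 linear_be0_left, unfolded o_def])

lemma linear_rho01: "Vector_Spaces.linear sw sw (rho01 y)"
  by (rule linear_cancel_inj[OF linear_j1 inj_j1])
    (simp add: j1_rho01 Vector_Spaces.linear_compose[OF linear_j1 linear_Le, unfolded o_def])

lemma linear_rho01_left: "Vector_Spaces.linear sh sw (\<lambda>y. rho01 y w)"
  by (rule linear_cancel_inj[OF linear_j1 inj_j1])
    (simp add: j1_rho01
      Vector_Spaces.linear_compose[OF linear_sigma0 linear_Le_left, unfolded o_def])

lemma linear_rho1: "Vector_Spaces.linear sv sw (rho1 x)"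
  by (rule linear_cancel_inj[OF linear_j1 inj_j1])
    (simp add: j1_rho1 linear_uminus
      Vector_Spaces.linear_compose[OF linear_j0 linear_Le_left, unfolded o_def])

lemma linear_rho1_left: "Vector_Spaces.linear sg sw (\<lambda>x. rho1 x v)"
  by (rule linear_cancel_inj[OF linear_j1 inj_j1])
    (simp add: j1_rho1 linear_uminus
      Vector_Spaces.linear_compose[OF linear_sigma1 linear_Le, unfolded o_def])

lemma sigma0_bracket_defect:
  obtains v where "sigma0 (bh y1 y2) = be0 (sigma0 y1) (sigma0 y2) + j0 v"
  using short_exact_fibre[OF exact0] pi0_bracket pi0_sigma0 by metis

lemma sigma0_mu_defect:
  obtains v where "sigma0 (mu x) = eps (sigma1 x) + j0 v"
  using short_exact_fibre[OF exact0] pi0_eps pi0_sigma0 pi1_sigma1 by metis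

lemma sigma1_bracket_defect:
  obtains w where "sigma1 (bg x1 x2) = be1 (sigma1 x1) (sigma1 x2) + j1 w"
  using short_exact_fibre[OF exact1] pi1_bracket pi1_sigma1 by metis

lemma sigma1_action_defect:
  obtains w where "sigma1 (L y x) = Le (sigma0 y) (sigma1 x) + j1 w"
  using short_exact_fibre[OF exact1] pi1_Le pi0_sigma0 pi1_sigma1 by metis

lemma rho00_bracket: "rho00 (bh y1 y2) v = rho00 y1 (rho00 y2 v) - rho00 y2 (rho00 y1 v)"
proof (rule injD[OF inj_j0])
  obtain u where u: "sigma0 (bh y1 y2) = be0 (sigma0 y1) (sigma0 y2) + j0 u"
    by (rule sigma0_bracket_defect)
  show "j0 (rho00 (bh y1 y2) v) = j0 (rho00 y1 (rho00 y2 v) - rho00 y2 (rho00 y1 v))"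
    by (simp add: j0_rho00 u linear_simps(2)[OF linear_be0_left] linear_simps(4)[OF linear_j0]
        bracket_j0_j0 lie_algebra_leibniz[OF lie_algebra_e0])
qed

lemma rho01_bracket: "rho01 (bh y1 y2) w = rho01 y1 (rho01 y2 w) - rho01 y2 (rho01 y1 w)"
proof (rule injD[OF inj_j1])
  obtain u where u: "sigma0 (bh y1 y2) = be0 (sigma0 y1) (sigma0 y2) + j0 u"
    by (rule sigma0_bracket_defect)
  show "j1 (rho01 (bh y1 y2) w) = j1 (rho01 y1 (rho01 y2 w) - rho01 y2 (rho01 y1 w))"
    by (simp add: j1_rho01 u linear_simps(2)[OF linear_Le_left] linear_simps(4)[OF linear_j1]
        Le_j0_j1 Le_bracket)
qed

lemma phi_rho01: "phi (rho01 y w) = rho00 y (phi w)"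
proof (rule injD[OF inj_j0])
  show "j0 (phi (rho01 y w)) = j0 (rho00 y (phi w))"
    by (simp add: j0_rho00 flip: eps_j1) (simp add: j1_rho01 eps_Le)
qed

lemma rho1_bracket: "rho1 (bg x1 x2) v = rho1 x1 (phi (rho1 x2 v)) - rho1 x2 (phi (rho1 x1 v))"
proof (rule injD[OF inj_j1])
  obtain w where w: "sigma1 (bg x1 x2) = be1 (sigma1 x1) (sigma1 x2) + j1 w"
    by (rule sigma1_bracket_defect)
  have "j1 (rho1 (bg x1 x2) v)
      = - be1 (Le (j0 v) (sigma1 x1)) (sigma1 x2) - be1 (sigma1 x1) (Le (j0 v) (sigma1 x2))"
    by (simp add: j1_rho1 w linear_simps(2)[OF linear_Le] Le_j0_j1 Le_derivation)
  also have "\<dots> = j1 (rho1 x1 (phi (rho1 x2 v)) - rho1 x2 (phi (rho1 x1 v)))"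
    by (simp add: linear_simps(4)[OF linear_j1] j1_rho1 flip: eps_j1)
      (simp add: Le_eps j1_rho1 linear_simps(3)[OF linear_be1_left]
        lie_algebra_antisym[OF lie_algebra_e1, of "sigma1 x1"])
  finally show "j1 (rho1 (bg x1 x2) v)
      = j1 (rho1 x1 (phi (rho1 x2 v)) - rho1 x2 (phi (rho1 x1 v)))" .
qed

lemma rho00_mu: "rho00 (mu x) v = phi (rho1 x v)"
proof (rule injD[OF inj_j0])
  obtain u where u: "sigma0 (mu x) = eps (sigma1 x) + j0 u"
    by (rule sigma0_mu_defect)
  show "j0 (rho00 (mu x) v) = j0 (phi (rho1 x v))"
    by (simp add: j0_rho00 u linear_simps(2)[OF linear_be0_left] bracket_j0_j0 flip: eps_j1)
      (simp add: j1_rho1 linear_simps(3)[OF linear_eps] eps_Le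
        lie_algebra_antisym[OF lie_algebra_e0, of "eps (sigma1 x)"])
qed

lemma rho01_mu: "rho01 (mu x) w = rho1 x (phi w)"
proof (rule injD[OF inj_j1])
  obtain u where u: "sigma0 (mu x) = eps (sigma1 x) + j0 u"
    by (rule sigma0_mu_defect)
  show "j1 (rho01 (mu x) w) = j1 (rho1 x (phi w))"
    by (simp add: j1_rho01 j1_rho1 u linear_simps(2)[OF linear_Le_left] Le_j0_j1 Le_eps
        flip: eps_j1)
      (simp add: lie_algebra_antisym[OF lie_algebra_e1, of "j1 w"])
qed

lemma rho1_action: "rho1 (L y x) v = rho01 y (rho1 x v) - rho1 x (rho00 y v)"
proof (rule injD[OF inj_j1])
  obtain w where w: "sigma1 (L y x) = Le (sigma0 y) (sigma1 x) + j1 w"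
    by (rule sigma1_action_defect)
  show "j1 (rho1 (L y x) v) = j1 (rho01 y (rho1 x v) - rho1 x (rho00 y v))"
    by (simp add: j1_rho01 j1_rho1 j0_rho00 w linear_simps(2,3)[OF linear_Le]
        linear_simps(4)[OF linear_j1] Le_j0_j1 Le_bracket)
qed

lemma two_representation_rho:
  "two_representation sg bg sh bh mu L sw sv phi rho01 rho00 rho1"
  unfolding two_representation_def
  using linear_rho01 linear_rho01_left linear_rho00 linear_rho00_left linear_rho1
    linear_rho1_left rho01_bracket rho00_bracket phi_rho01 rho1_bracket rho00_mu rho01_mu
    rho1_action
  by blast

end

theorem mainTheorem5:
  fixes sg :: "'k::field \<Rightarrow> 'g::ab_group_add \<Rightarrow> 'g" and bg :: "'g \<Rightarrow> 'g \<Rightarrow> 'g"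
    and sh :: "'k \<Rightarrow> 'h::ab_group_add \<Rightarrow> 'h" and bh :: "'h \<Rightarrow> 'h \<Rightarrow> 'h"
    and mu :: "'g \<Rightarrow> 'h" and L :: "'h \<Rightarrow> 'g \<Rightarrow> 'g"
    and sw :: "'k \<Rightarrow> 'w::ab_group_add \<Rightarrow> 'w" and sv :: "'k \<Rightarrow> 'v::ab_group_add \<Rightarrow> 'v"
    and phi :: "'w \<Rightarrow> 'v"
    and se1 :: "'k \<Rightarrow> 'e1::ab_group_add \<Rightarrow> 'e1" and be1 :: "'e1 \<Rightarrow> 'e1 \<Rightarrow> 'e1"
    and se0 :: "'k \<Rightarrow> 'e0::ab_group_add \<Rightarrow> 'e0" and be0 :: "'e0 \<Rightarrow> 'e0 \<Rightarrow> 'e0"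
    and eps :: "'e1 \<Rightarrow> 'e0" and Le :: "'e0 \<Rightarrow> 'e1 \<Rightarrow> 'e1"
    and j1 :: "'w \<Rightarrow> 'e1" and j0 :: "'v \<Rightarrow> 'e0"
    and pi1 :: "'e1 \<Rightarrow> 'g" and pi0 :: "'e0 \<Rightarrow> 'h"
    and sigma0 :: "'h \<Rightarrow> 'e0" and sigma1 :: "'g \<Rightarrow> 'e1"
  assumes cm: "crossed_module sg bg sh bh mu L"
    and phi_lin: "Vector_Spaces.linear sw sv phi"
    and ext: "two_extension sg bg sh bh mu L sw sv phi se1 be1 se0 be0 eps Le j1 j0 pi1 pi0"
    and sigma0_lin: "Vector_Spaces.linear sh se0 sigma0"
    and sigma1_lin: "Vector_Spaces.linear sg se1 sigma1"
    and sec0: "\<And>y. pi0 (sigma0 y) = y"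
    and sec1: "\<And>x. pi1 (sigma1 x) = x"
  shows "(\<forall>y v. be0 (sigma0 y) (j0 v) \<in> range j0) \<and>
         (\<forall>y w. Le (sigma0 y) (j1 w) \<in> range j1) \<and>
         (\<forall>x v. - Le (j0 v) (sigma1 x) \<in> range j1) \<and>
         two_representation sg bg sh bh mu L sw sv phi
           (\<lambda>y w. THE w'. j1 w' = Le (sigma0 y) (j1 w))
           (\<lambda>y v. THE v'. j0 v' = be0 (sigma0 y) (j0 v))
           (\<lambda>x v. THE w'. j1 w' = - Le (j0 v) (sigma1 x))"
proof -
  interpret two_extension_with_sections sg bg sh bh mu L sw sv phi se1 be1 se0 be0 eps Le
      j1 j0 pi1 pi0 sigma0 sigma1
    using cm ext sigma0_lin sigma1_lin sec0 sec1 by (simp add: two_extension_with_sections_def)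
  show ?thesis
    using bracket_sigma0_j0_in_range Le_sigma0_j1_in_range Le_j0_sigma1_in_range
      two_representation_rho
    unfolding rho01_def[abs_def] rho00_def[abs_def] rho1_def[abs_def]
    by blast
qed

end
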